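(* Let $n\ge0$ and set $\xi_0=1$, $\xi_{n+2}=-1$, and $\xi_k=\cos\frac{(2k-1)\pi}{2n+2}$ for $1\le k\le n+1$. Then $1=\xi_0>\xi_1>\cdots>\xi_{n+1}>\xi_{n+2}=-1$, and for each $1\le k\le n+1$ the polynomial $S_{2n+1}(x)$ has exactly one zero in $(\xi_{k+1},\xi_k)$. These $n+1$ zeros together with $x=1$ are all the zeros of $S_{2n+1}(x)$, and all of them are simple.
   Context: $U_n(x)$ is the Chebyshev polynomial of the second kind ($U_n(\cos\theta)=\sin((n+1)\theta)/\sin\theta$), with $U_{-1}=0$. For $n\ge0$, $S_{2n+1}(x)=2(2nx^2+2x^2+2nx-x-1)U_n(x)-2(2nx+3x+2n+1)U_{n-1}(x)$, a polynomial of degree $n+2$. *)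

theory Defs
  imports Complex_Main "HOL-Computational_Algebra.Polynomial"
begin

text \<open>Chebyshev polynomials of the second kind, via the standard recurrence
  U_0 = 1, U_1 = 2x, U_(n+2) = 2x U_(n+1) - U_n (equivalent to
  U_n(cos t) = sin((n+1)t)/sin t).\<close>
fun chebU :: "nat \<Rightarrow> real poly" where
  "chebU 0 = 1"
| "chebU (Suc 0) = [:0, 2:]"
| "chebU (Suc (Suc n)) = [:0, 2:] * chebU (Suc n) - chebU n"

definition chebU_prev :: "nat \<Rightarrow> real poly" where
  "chebU_prev n = (if n = 0 then 0 else chebU (n - 1))"

definition S_odd :: "nat \<Rightarrow> real poly" where
  "S_odd n = smult 2 ([:-1, 2 * real n - 1, 2 * real n + 2:] * chebU n)
             - smult 2 ([:2 * real n + 1, 2 * real n + 3:] * chebU_prev n)"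

definition xi :: "nat \<Rightarrow> nat \<Rightarrow> real" where
  "xi n k = (if k = 0 then 1 else if k = n + 2 then -1
             else cos ((2 * real k - 1) * pi / (2 * real n + 2)))"

end

theory Submission
  imports Defs "HOL-Computational_Algebra.Fundamental_Theorem_Algebra"
begin

text \<open>With \<open>x = cos t\<close> one has \<open>U\<^sub>n(x) sin t = sin((n+1)t)\<close>. At the interior nodes
  \<open>\<xi>\<^sub>k = cos t\<^sub>k\<close> the factor \<open>cos((n+1)t\<^sub>k)\<close> vanishes, which collapses \<open>S\<^sub>2\<^sub>n\<^sub>+\<^sub>1(\<xi>\<^sub>k)\<close> to
  \<open>-2 sin((n+1)t\<^sub>k)(1 + \<xi>\<^sub>k)\<^sup>2 / sin t\<^sub>k\<close>, of sign \<open>(-1)\<^sup>k\<close>; the value at \<open>\<xi>\<^sub>n\<^sub>+\<^sub>2 = -1\<close> is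
  \<open>4(-1)\<^sup>n\<close>, continuing the alternation. The intermediate value theorem gives a zero in each
  of the \<open>n + 1\<close> intervals \<open>(\<xi>\<^sub>k\<^sub>+\<^sub>1, \<xi>\<^sub>k)\<close>; together with the zero at \<open>1\<close> these are \<open>n + 2\<close>
  distinct zeros of a polynomial of degree at most \<open>n + 2\<close>, so they are all of its complex
  zeros and each is simple.\<close>

lemma poly_map_poly_of_real:
  "poly (map_poly of_real p) (of_real x) = (of_real (poly p x) :: 'a :: {real_algebra_1, comm_ring_1})"
  by (induction p) (auto simp: map_poly_pCons)

lemma complex_poly_roots_simple_if_degree_le_card:
  fixes p :: "complex poly"
  assumes "p \<noteq> 0" "finite R" "degree p \<le> card R" "\<And>z. z \<in> R \<Longrightarrow> poly p z = 0"
  shows "{z. poly p z = 0} = R" and "\<And>z. z \<in> R \<Longrightarrow> order z p = 1"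
proof -
  have sub: "mset_set R \<subseteq># proots p"
    unfolding subseteq_mset_def
  proof
    fix z show "count (mset_set R) z \<le> count (proots p) z"
      using assms order_root[of p z] by (cases "z \<in> R") (auto simp: count_mset_set')
  qed
  have "size (proots p) \<le> size (mset_set R)"
    using size_proots_complex[of p] assms(3) by simp
  then have eq: "mset_set R = proots p"
    using sub mset_subset_size by (metis subset_mset.le_imp_less_or_eq leD)
  show "{z. poly p z = 0} = R"
    using set_count_proots[OF assms(1)] eq assms(2) by (metis finite_set_mset_mset_set)
  show "order z p = 1" if "z \<in> R" for z
    using that eq count_proots[OF assms(1)] assms(2) by (metis count_mset_set(1))
qed

lemma real_poly_roots_simple_if_degree_le_card:
  fixes p :: "real poly" and z :: complex
  assumes "p \<noteq> 0" "finite R" "degree p \<le> card R" "\<And>x. x \<in> R \<Longrightarrow> poly p x = 0"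
    and root: "poly (map_poly of_real p) z = 0"
  shows "z \<in> of_real ` R" and "order z (map_poly of_real p) = 1"
proof -
  let ?q = "map_poly complex_of_real p"
  have "?q \<noteq> 0" using assms(1) by (auto simp: poly_eq_iff coeff_map_poly)
  moreover have "degree ?q \<le> card (complex_of_real ` R)"
    using assms(3) by (simp add: degree_map_poly card_image inj_on_def)
  moreover have "poly ?q w = 0" if "w \<in> complex_of_real ` R" for w
    using that assms(4) by (auto simp: poly_map_poly_of_real)
  ultimately have "{w. poly ?q w = 0} = complex_of_real ` R"
    and "\<And>w. w \<in> complex_of_real ` R \<Longrightarrow> order w ?q = 1"
    using complex_poly_roots_simple_if_degree_le_card[of ?q "complex_of_real ` R"] assms(2)
    by blast+
  then show "z \<in> of_real ` R" and "order z ?q = 1" using root by auto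
qed

lemma interval_index_unique:
  fixes a :: "nat \<Rightarrow> real"
  assumes dec: "\<And>k. k \<le> m \<Longrightarrow> a (Suc k) < a k"
    and "j \<le> m" "k \<le> m"
    and "a (Suc j) < x" "x < a j" "a (Suc k) < x" "x < a k"
  shows "j = k"
proof -
  have antimono: "a i' \<le> a i" if "i \<le> i'" "i' \<le> Suc m" for i i'
    using lift_Suc_antimono_le_ivl[of "{..m}" a i i'] dec that by fastforce
  show ?thesis
    using antimono[of "Suc j" k] antimono[of "Suc k" j] assms(2-) by (cases j k rule: linorder_cases) auto
qed

lemma real_poly_roots_interlace:
  fixes p :: "real poly" and a :: "nat \<Rightarrow> real" and z :: complex
  assumes dec: "\<And>k. k \<le> m \<Longrightarrow> a (Suc k) < a k"
    and "p \<noteq> 0" and deg: "degree p \<le> m + 1" and root0: "poly p (a 0) = 0"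
    and sign_change: "\<And>k. k \<in> {1..m} \<Longrightarrow> poly p (a (Suc k)) * poly p (a k) < 0"
  shows "\<forall>k\<in>{1..m}. \<exists>!x. a (Suc k) < x \<and> x < a k \<and> poly p x = 0"
    and "poly (map_poly of_real p) z = 0 \<Longrightarrow>
           \<exists>x. z = of_real x \<and> (x = a 0 \<or> (\<exists>k\<in>{1..m}. a (Suc k) < x \<and> x < a k))"
    and "poly (map_poly of_real p) z = 0 \<Longrightarrow> order z (map_poly of_real p) = 1"
proof -
  have "\<exists>x. a (Suc k) < x \<and> x < a k \<and> poly p x = 0" if "k \<in> {1..m}" for k
    using poly_IVT[of "a (Suc k)" "a k" p] dec[of k] sign_change[OF that] that by auto
  then obtain r where r: "\<And>k. k \<in> {1..m} \<Longrightarrow> a (Suc k) < r k \<and> r k < a k \<and> poly p (r k) = 0"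
    by metis
  have below_a0: "x < a 0" if "k \<in> {1..m}" "x < a k" for k x
    using lift_Suc_antimono_le_ivl[of "{..m}" a 0 k] dec that by fastforce
  have same_interval: "j = k" if "j \<in> {1..m}" "k \<in> {1..m}"
    "a (Suc j) < x" "x < a j" "a (Suc k) < x" "x < a k" for j k x
    using interval_index_unique[of m a j k x] dec that by auto
  define R where "R = insert (a 0) (r ` {1..m})"
  have "inj_on r {1..m}"
    by (rule inj_onI) (use r same_interval in metis)
  moreover have "a 0 \<notin> r ` {1..m}"
    using r below_a0 by fastforce
  ultimately have "card R = m + 1"
    by (simp add: R_def card_image)
  moreover have "poly p x = 0" if "x \<in> R" for x
    using that root0 r by (auto simp: R_def)
  ultimately have roots_R: "z \<in> of_real ` R" "order z (map_poly of_real p) = 1"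
    if "poly (map_poly of_real p) z = 0" for z :: complex
    using real_poly_roots_simple_if_degree_le_card[of p R z] \<open>p \<noteq> 0\<close> deg that
    by (auto simp: R_def)
  show "\<forall>k\<in>{1..m}. \<exists>!x. a (Suc k) < x \<and> x < a k \<and> poly p x = 0"
  proof
    fix k assume k: "k \<in> {1..m}"
    have "y = r k" if "a (Suc k) < y" "y < a k" "poly p y = 0" for y
    proof -
      have "y \<in> R"
        using roots_R(1)[of "of_real y"] that(3) by (auto simp: poly_map_poly_of_real)
      moreover have "y \<noteq> a 0"
        using below_a0[OF k that(2)] by simp
      ultimately obtain j where "j \<in> {1..m}" "y = r j"
        unfolding R_def by auto
      then show ?thesis
        using same_interval[of j k y] r[of j] k that by auto
    qed
    then show "\<exists>!x. a (Suc k) < x \<and> x < a k \<and> poly p x = 0"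
      using r[OF k] by blast
  qed
  show "\<exists>x. z = of_real x \<and> (x = a 0 \<or> (\<exists>k\<in>{1..m}. a (Suc k) < x \<and> x < a k))"
    if "poly (map_poly of_real p) z = 0"
    using roots_R(1)[OF that] r unfolding R_def by blast
  show "order z (map_poly of_real p) = 1" if "poly (map_poly of_real p) z = 0"
    using roots_R(2)[OF that] .
qed

lemma poly_chebU_cos_mult_sin: "poly (chebU n) (cos t) * sin t = sin (real (Suc n) * t)"
proof (induction n rule: chebU.induct)
  case 1 then show ?case by simp
next
  case 2 then show ?case by (simp add: mult.commute[of t 2] sin_double)
next
  case (3 n)
  have sin_rec: "sin (real (Suc (Suc (Suc n))) * t)
      = 2 * cos t * sin (real (Suc (Suc n)) * t) - sin (real (Suc n) * t)"
  proof -
    have "real (Suc (Suc (Suc n))) * t = real (Suc (Suc n)) * t + t"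
      and "real (Suc n) * t = real (Suc (Suc n)) * t - t"
      by (simp_all add: algebra_simps)
    then show ?thesis by (simp only: sin_add sin_diff) (simp add: algebra_simps)
  qed
  have "poly (chebU (Suc (Suc n))) (cos t) * sin t
      = 2 * cos t * (poly (chebU (Suc n)) (cos t) * sin t) - poly (chebU n) (cos t) * sin t"
    by (simp add: algebra_simps)
  also have "\<dots> = sin (real (Suc (Suc (Suc n))) * t)"
    using 3 sin_rec by simp
  finally show ?case .
qed

lemma poly_chebU_prev_cos_mult_sin: "poly (chebU_prev n) (cos t) * sin t = sin (real n * t)"
  by (cases n) (auto simp: chebU_prev_def poly_chebU_cos_mult_sin)

lemma degree_chebU_le: "degree (chebU n) \<le> n"
proof (induction n rule: chebU.induct)
  case (3 n)
  have "degree ([:0, 2:] * chebU (Suc n)) \<le> Suc (Suc n)"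
    using degree_mult_le[of "[:0, 2:]" "chebU (Suc n)"] 3 by auto
  moreover have "degree (chebU n) \<le> Suc (Suc n)"
    using 3 by auto
  ultimately show ?case by (simp add: degree_diff_le)
qed auto

lemma degree_S_odd_le: "degree (S_odd n) \<le> n + 2"
proof -
  have "degree (chebU_prev n) \<le> n"
    using degree_chebU_le[of "n - 1"] by (auto simp: chebU_prev_def)
  then have "degree ([:2 * real n + 1, 2 * real n + 3:] * chebU_prev n) \<le> n + 2"
    using degree_mult_le[of "[:2 * real n + 1, 2 * real n + 3:]" "chebU_prev n"] by auto
  moreover have "degree ([:-1, 2 * real n - 1, 2 * real n + 2:] * chebU n) \<le> n + 2"
    using degree_mult_le[of "[:-1, 2 * real n - 1, 2 * real n + 2:]" "chebU n"] degree_chebU_le[of n]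
    by auto
  ultimately show ?thesis
    unfolding S_odd_def by (intro degree_diff_le) auto
qed

lemma poly_chebU_one: "poly (chebU n) 1 = real (Suc n)"
  by (induction n rule: chebU.induct) (auto simp: algebra_simps)

lemma poly_chebU_minus_one: "poly (chebU n) (-1) = (-1) ^ n * real (Suc n)"
  by (induction n rule: chebU.induct) (auto simp: algebra_simps)

lemma poly_S_odd_one: "poly (S_odd n) 1 = 0"
  by (cases n) (auto simp: S_odd_def chebU_prev_def poly_chebU_one algebra_simps)

lemma poly_S_odd_minus_one: "poly (S_odd n) (-1) = 4 * (-1) ^ n"
  by (cases n) (auto simp: S_odd_def chebU_prev_def poly_chebU_minus_one algebra_simps)

text \<open>At a zero of \<open>cos((n+1)t)\<close> we have \<open>sin(nt) = sin((n+1)t) cos t\<close>, so both \<open>U\<^sub>n\<close> and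
  \<open>U\<^sub>n\<^sub>-\<^sub>1\<close> are multiples of \<open>sin((n+1)t) / sin t\<close> and the cubic in \<open>cos t\<close> factors.\<close>

lemma poly_S_odd_cos:
  assumes "cos (real (Suc n) * t) = 0" "sin t \<noteq> 0"
  shows "poly (S_odd n) (cos t) = - 2 * sin (real (Suc n) * t) * (1 + cos t)\<^sup>2 / sin t"
proof -
  have sin_n: "sin (real n * t) = sin (real (Suc n) * t) * cos t"
  proof -
    have "real n * t = real (Suc n) * t - t" by (simp add: algebra_simps)
    then show ?thesis using assms(1) by (simp add: sin_diff)
  qed
  define c where "c = cos t"
  define s where "s = sin (real (Suc n) * t)"
  define A where "A = poly (chebU n) c"
  define B where "B = poly (chebU_prev n) c"
  have A: "A * sin t = s"
    unfolding A_def s_def c_def by (rule poly_chebU_cos_mult_sin)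
  have B: "B * sin t = s * c"
    unfolding B_def s_def c_def using poly_chebU_prev_cos_mult_sin[of n t] sin_n by simp
  have "poly (S_odd n) c * sin t
      = 2 * (-1 + (2 * real n - 1) * c + (2 * real n + 2) * c\<^sup>2) * (A * sin t)
        - 2 * (2 * real n + 1 + (2 * real n + 3) * c) * (B * sin t)"
    unfolding S_odd_def A_def B_def by (simp add: algebra_simps power2_eq_square)
  also have "\<dots> = - 2 * s * (1 + c)\<^sup>2"
    unfolding A B by (simp add: algebra_simps power2_eq_square)
  finally show ?thesis
    using assms(2) unfolding c_def s_def by (simp add: field_simps)
qed

definition node_angle :: "nat \<Rightarrow> nat \<Rightarrow> real" where
  "node_angle n k = (2 * real k - 1) * pi / (2 * real n + 2)"

lemma node_angle_bounds:
  assumes "1 \<le> k" "k \<le> n + 1"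
  shows "0 < node_angle n k" "node_angle n k < pi"
proof -
  have "(2 * real k - 1) * pi < (2 * real n + 2) * pi"
    using assms by (intro mult_strict_right_mono) auto
  then show "0 < node_angle n k" "node_angle n k < pi"
    using assms by (auto simp: node_angle_def divide_less_eq)
qed

lemma xi_eq_cos_node_angle: "1 \<le> k \<Longrightarrow> k \<le> n + 1 \<Longrightarrow> xi n k = cos (node_angle n k)"
  by (simp add: xi_def node_angle_def)

lemma node_angle_less_Suc: "node_angle n k < node_angle n (Suc k)"
  by (simp add: node_angle_def divide_strict_right_mono)

lemma xi_Suc_less: "k \<le> n + 1 \<Longrightarrow> xi n (Suc k) < xi n k"
proof -
  assume k: "k \<le> n + 1"
  consider "k = 0" | "1 \<le> k" "k \<le> n" | "k = n + 1"
    using k by linarith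
  then show ?thesis
  proof cases
    case 1
    have "cos (node_angle n 1) < cos 0"
      using node_angle_bounds[of 1 n] by (intro cos_monotone_0_pi) auto
    then show ?thesis using 1 xi_eq_cos_node_angle[of 1 n] by (simp add: xi_def)
  next
    case 2
    have "cos (node_angle n (Suc k)) < cos (node_angle n k)"
      using node_angle_bounds[of k n] node_angle_bounds[of "Suc k" n] 2 node_angle_less_Suc[of n k]
      by (intro cos_monotone_0_pi) auto
    then show ?thesis using 2 xi_eq_cos_node_angle[of k n] xi_eq_cos_node_angle[of "Suc k" n] by simp
  next
    case 3
    have "cos pi < cos (node_angle n (n + 1))"
      using node_angle_bounds[of "n + 1" n] by (intro cos_monotone_0_pi) auto
    then show ?thesis using 3 xi_eq_cos_node_angle[of "n + 1" n] by (simp add: xi_def)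
  qed
qed

text \<open>The node angle satisfies \<open>(n+1) t\<^sub>k = (k-1)\<pi> + \<pi>/2\<close>, so \<open>sin((n+1)t\<^sub>k) = (-1)\<^sup>k\<^sup>-\<^sup>1\<close>.\<close>

lemma S_odd_sign_at_xi:
  assumes "1 \<le> k" "k \<le> n + 2"
  shows "(-1) ^ k * poly (S_odd n) (xi n k) > 0"
proof (cases "k = n + 2")
  case True
  then show ?thesis by (simp add: xi_def poly_S_odd_minus_one power_add flip: power_mult_distrib)
next
  case False
  then have k: "1 \<le> k" "k \<le> n + 1" using assms by auto
  define t where "t = node_angle n k"
  have "real (Suc n) * t = real (k - 1) * pi + pi / 2"
    using k unfolding t_def node_angle_def by (simp add: field_simps of_nat_diff)
  then have cos_t: "cos (real (Suc n) * t) = 0" and sin_t: "sin (real (Suc n) * t) = (-1) ^ (k - 1)"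
    by (simp_all add: cos_add sin_add)
  have "sin t > 0"
    using node_angle_bounds[OF k] sin_gt_zero unfolding t_def by auto
  have "cos pi < cos t"
    using node_angle_bounds[OF k] unfolding t_def by (intro cos_monotone_0_pi) auto
  then have "1 + cos t > 0" by simp
  have sign: "(-1::real) ^ k * (-1) ^ (k - 1) = -1"
    using k(1) by (cases k) (simp_all flip: power_add add: power_mult_distrib[symmetric])
  have "(-1) ^ k * poly (S_odd n) (xi n k) = 2 * (1 + cos t)\<^sup>2 / sin t * (- ((-1) ^ k * (-1) ^ (k - 1)))"
    using poly_S_odd_cos[OF cos_t] \<open>sin t > 0\<close> xi_eq_cos_node_angle[OF k] sin_t
    unfolding t_def by (simp add: field_simps)
  also have "\<dots> = 2 * (1 + cos t)\<^sup>2 / sin t"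
    using sign by simp
  also have "\<dots> > 0"
    using \<open>sin t > 0\<close> \<open>1 + cos t > 0\<close> by (intro divide_pos_pos) auto
  finally show ?thesis .
qed

lemma mult_neg_if_alternating_signs:
  fixes u v :: "'a :: linordered_idom"
  assumes "(-1) ^ k * u > 0" "(-1) ^ Suc k * v > 0"
  shows "v * u < 0"
proof -
  have "0 < ((-1) ^ k * u) * ((-1) ^ Suc k * v)"
    using assms by (rule mult_pos_pos)
  also have "\<dots> = - (v * u)"
    by (simp add: algebra_simps flip: power_add)
  finally show ?thesis by simp
qed

theorem mainTheorem15:
  fixes n :: nat
  shows "xi n 0 = 1 \<and> xi n (n + 2) = -1
    \<and> (\<forall>k \<le> n + 1. xi n (k + 1) < xi n k)
    \<and> (\<forall>k \<in> {1..n+1}. \<exists>!x. xi n (k + 1) < x \<and> x < xi n k \<and> poly (S_odd n) x = 0)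
    \<and> poly (S_odd n) 1 = 0
    \<and> (\<forall>z::complex. poly (map_poly complex_of_real (S_odd n)) z = 0 \<longrightarrow>
          (\<exists>x. z = complex_of_real x \<and>
               (x = 1 \<or> (\<exists>k \<in> {1..n+1}. xi n (k + 1) < x \<and> x < xi n k))))
    \<and> (\<forall>z::complex. poly (map_poly complex_of_real (S_odd n)) z = 0 \<longrightarrow>
          order z (map_poly complex_of_real (S_odd n)) = 1)"
proof -
  have "S_odd n \<noteq> 0"
    using poly_S_odd_minus_one[of n] by auto
  moreover have "poly (S_odd n) (xi n 0) = 0"
    using poly_S_odd_one by (simp add: xi_def)
  moreover have "poly (S_odd n) (xi n (Suc k)) * poly (S_odd n) (xi n k) < 0" if "k \<in> {1..n+1}" for k
    using that S_odd_sign_at_xi[of k n] S_odd_sign_at_xi[of "Suc k" n]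
    by (intro mult_neg_if_alternating_signs) auto
  ultimately have "\<forall>k\<in>{1..n+1}. \<exists>!x. xi n (Suc k) < x \<and> x < xi n k \<and> poly (S_odd n) x = 0"
    and "\<And>z. poly (map_poly complex_of_real (S_odd n)) z = 0 \<Longrightarrow>
           \<exists>x. z = complex_of_real x \<and> (x = xi n 0 \<or> (\<exists>k\<in>{1..n+1}. xi n (Suc k) < x \<and> x < xi n k))"
    and "\<And>z. poly (map_poly complex_of_real (S_odd n)) z = 0 \<Longrightarrow>
           order z (map_poly complex_of_real (S_odd n)) = 1"
    using real_poly_roots_interlace[of "n + 1" "xi n" "S_odd n"] xi_Suc_less degree_S_odd_le[of n]
    by simp_all
  then show ?thesis
    using xi_Suc_less[of _ n] poly_S_odd_one[of n] by (simp add: xi_def)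
qed

end
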